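(* Let $k\geq 1$ be an integer. For every natural number $n\geq 1$, $\sigma_k(B_n)\leq B_{\sigma_k(n)}$, and equality holds only if $n=1$.
   Context: The balancing numbers $(B_n)_{n\geq 0}$ are defined by $B_0=0$, $B_1=1$, $B_{n+1}=6B_n-B_{n-1}$ for $n\geq 1$ (so $B_n=\frac{\alpha^n-\beta^n}{\alpha-\beta}$ with $\alpha=3+2\sqrt2$, $\beta=3-2\sqrt2$). For a positive integer $m$, $\sigma_k(m)$ denotes the sum of the $k$-th powers of the positive divisors of $m$. *)

theory Defs
  imports Main
begin

text \<open>Balancing numbers: B 0 = 0, B 1 = 1, B (n+2) = 6 B (n+1) - B n.
  Defined over int (all values are nonnegative).\<close>
fun balancing :: "nat \<Rightarrow> int" where
  "balancing 0 = 0"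
| "balancing (Suc 0) = 1"
| "balancing (Suc (Suc n)) = 6 * balancing (Suc n) - balancing n"

definition divisor_sigma :: "nat \<Rightarrow> nat \<Rightarrow> nat" where
  "divisor_sigma k m = (\<Sum>d\<in>{d. d dvd m \<and> d > 0}. d ^ k)"

end

theory Submission
  imports Defs "HOL-Analysis.Harmonic_Numbers" "HOL-Number_Theory.Cong"
begin

text \<open>Let m = B n with n \<ge> 2. The divisor side is small: sigma_k(m) \<le> m^(k-1) sigma_1(m)
  \<le> m^k (1 + ln m) \<le> (2n - 1) m^k, because m \<le> 6^(n-1). The other side grows fast, since
  B (j+1) > 5 B j, B (a+b) \<ge> 4 B a B b and sigma_k(n) \<ge> n^k + 1.
  For k \<ge> 2 and j = n^(k-1) this gives B (sigma_k n) > 5 B (n j) \<ge> 5 4^(j-1) m^j,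
  which beats (2n - 1) m^k. For k = 1 and composite n with a proper divisor c \<ge> sqrt n,
  sigma_1(n) \<ge> n + c + 1 gives B (sigma_1 n) \<ge> 5^(c+1) m > (2n - 1) m.
  For k = 1 and n = p prime only B (p+1) > 5 m is available, so we need sigma_1(m) \<le> 5 m:
  every prime q dividing B p satisfies p \<le> q, because q divides some B j with j \<le> q + 1
  and then also B (gcd p j); hence sigma_1(m)/m \<le> (1 + 1/p)^r \<le> e, where p^r \<le> m < p^p.\<close>

lemma balancing_nonneg_and_growth: "0 \<le> balancing j \<and> 5 * balancing j < balancing (Suc j)"
  by (induction j) auto

lemma balancing_nonneg [simp]: "0 \<le> balancing j"
  using balancing_nonneg_and_growth by blast

lemma balancing_Suc_gt: "5 * balancing j < balancing (Suc j)"
  using balancing_nonneg_and_growth by blast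

lemma balancing_pos: "0 < n \<Longrightarrow> 0 < balancing n"
  using balancing_Suc_gt[of "n - 1"] balancing_nonneg[of "n - 1"]
  by (cases n) (auto simp del: balancing_nonneg)

lemma balancing_mono: "i \<le> j \<Longrightarrow> balancing i \<le> balancing j"
proof (rule lift_Suc_mono_le[of balancing])
  show "balancing n \<le> balancing (Suc n)" for n
    using balancing_Suc_gt[of n] balancing_nonneg[of n] by linarith
qed

lemma five_pow_mult_balancing_le: "5 ^ t * balancing j \<le> balancing (j + t)"
proof (induction t)
  case (Suc t)
  then show ?case using balancing_Suc_gt[of "j + t"] by simp
qed simp

lemma balancing_le_pow: "balancing n \<le> 6 ^ (n - 1)"
proof (induction n rule: balancing.induct)
  case (3 n)
  then show ?case
    using balancing_nonneg[of n] by (cases n) (simp_all del: balancing_nonneg)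
qed simp_all

lemma balancing_add:
  "balancing (Suc (a + b)) = balancing (Suc a) * balancing (Suc b) - balancing a * balancing b"
proof (induction a arbitrary: b rule: balancing.induct)
  case (3 a)
  have "balancing (Suc (Suc (Suc a) + b))
      = 6 * balancing (Suc (Suc a + b)) - balancing (Suc (a + b))"
    by simp
  also have "\<dots> = balancing (Suc (Suc (Suc a))) * balancing (Suc b) - balancing (Suc (Suc a)) * balancing b"
    unfolding 3 by (simp add: algebra_simps)
  finally show ?case .
qed simp_all

lemma balancing_supermult: "4 * balancing a * balancing b \<le> balancing (a + b)"
proof (cases b)
  case (Suc b')
  have "balancing a * balancing b' \<le> balancing a * balancing (Suc b')"
    by (simp add: balancing_mono mult_left_mono)
  moreover have "5 * balancing a * balancing (Suc b') \<le> balancing (Suc a) * balancing (Suc b')"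
    using balancing_Suc_gt[of a] by (simp add: mult_right_mono)
  ultimately show ?thesis
    using balancing_add[of a b'] Suc by simp
qed simp

lemma pow_balancing_le_balancing_mult:
  "0 < j \<Longrightarrow> 4 ^ (j - 1) * balancing a ^ j \<le> balancing (a * j)"
proof (induction j rule: nat_induct_non_zero)
  case (Suc j)
  have "4 ^ (Suc j - 1) * balancing a ^ Suc j = 4 * (4 ^ (j - 1) * balancing a ^ j) * balancing a"
    using Suc.hyps by (cases j) (simp_all add: algebra_simps)
  also have "\<dots> \<le> 4 * balancing (a * j) * balancing a"
    using Suc.IH by (simp add: mult_right_mono)
  also have "\<dots> \<le> balancing (a * Suc j)"
    using balancing_supermult[of "a * j" a] by (simp add: add.commute)
  finally show ?case .
qed simp

lemma balancing_d_ocagne: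
  "balancing (Suc i) * balancing (i + t) - balancing i * balancing (Suc (i + t)) = balancing t"
proof (induction i)
  case (Suc i)
  have "balancing (Suc (Suc i)) * balancing (Suc i + t) - balancing (Suc i) * balancing (Suc (Suc i + t))
      = balancing (Suc i) * balancing (i + t) - balancing i * balancing (Suc (i + t))"
    by (simp add: algebra_simps)
  with Suc.IH show ?case by simp
qed simp

lemma coprime_balancing_Suc: "coprime (balancing (Suc j)) (balancing j)"
proof (rule coprimeI)
  fix c assume "c dvd balancing (Suc j)" "c dvd balancing j"
  then have "c dvd balancing (Suc j) * balancing (Suc j) - balancing j * balancing (Suc (Suc j))"
    by simp
  then show "is_unit c"
    using balancing_d_ocagne[of j 1] by simp
qed

lemma dvd_balancing_cancel_right:
  assumes "q dvd balancing (c + b)" and "q dvd balancing b"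
  shows "q dvd balancing c"
proof (cases b)
  case 0
  then show ?thesis using assms(1) by simp
next
  case (Suc b')
  have "q dvd balancing (Suc c) * balancing (Suc b') - balancing (Suc (c + b'))"
    using assms Suc by simp
  then have "q dvd balancing c * balancing b'"
    using balancing_add[of c b'] by simp
  moreover have "coprime q (balancing b')"
    using coprime_divisors[OF _ dvd_refl coprime_balancing_Suc[of b']] assms(2) Suc by simp
  ultimately show ?thesis
    by (simp add: coprime_dvd_mult_left_iff)
qed

lemma dvd_balancing_cancel_mult:
  "q dvd balancing (c + b * t) \<Longrightarrow> q dvd balancing b \<Longrightarrow> q dvd balancing c"
proof (induction t)
  case (Suc t)
  have "q dvd balancing ((c + b * t) + b)"
    using Suc.prems(1) by (simp add: ac_simps)
  then show ?case
    using Suc dvd_balancing_cancel_right by blast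
qed simp

lemma dvd_balancing_gcd:
  "q dvd balancing a \<Longrightarrow> q dvd balancing b \<Longrightarrow> q dvd balancing (gcd a b)"
proof (induction a b rule: gcd_nat_induct)
  case (step a b)
  have "q dvd balancing (a mod b + b * (a div b))"
    using step.prems(1) by simp
  then have "q dvd balancing (a mod b)"
    using step.prems(2) by (rule dvd_balancing_cancel_mult)
  then show ?case
    unfolding gcd_red_nat[of a b] using step by blast
qed simp

text \<open>Pigeonhole on the ratios B (j+1) / B j modulo q: two equal ratios at i < j
  make q divide B (i+1) B j - B i B (j+1) = B (j - i).\<close>
lemma ex_le_Suc_prime_dvd_balancing:
  assumes q: "prime q"
  shows "\<exists>j\<in>{1..q + 1}. int q dvd balancing j"
proof (rule ccontr)
  assume none: "\<not> ?thesis"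
  have "\<exists>x. [balancing j * x = 1] (mod int q)" if "j \<in> {1..q + 1}" for j
  proof (rule cong_solve_coprime_int)
    have "prime (int q)"
      using q by simp
    moreover have "\<not> int q dvd balancing j"
      using none that by blast
    ultimately show "coprime (balancing j) (int q)"
      by (metis prime_imp_coprime coprime_commute)
  qed
  then obtain inv where inv: "\<And>j. j \<in> {1..q + 1} \<Longrightarrow> [balancing j * inv j = 1] (mod int q)"
    by metis
  define ratio where "ratio j = (inv j * balancing (Suc j)) mod int q" for j
  have ratio: "[ratio j * balancing j = balancing (Suc j)] (mod int q)" if "j \<in> {1..q + 1}" for j
  proof -
    have "[ratio j * balancing j = balancing (Suc j) * (balancing j * inv j)] (mod int q)"
      unfolding ratio_def cong_def by (simp add: mod_mult_right_eq algebra_simps)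
    moreover have "[balancing (Suc j) * (balancing j * inv j) = balancing (Suc j) * 1] (mod int q)"
      using inv[OF that] by (rule cong_mult[OF cong_refl])
    ultimately show ?thesis
      by (metis cong_trans mult_1_right)
  qed
  have no_collision: False
    if ij: "i \<in> {1..q + 1}" "j \<in> {1..q + 1}" "i < j" "ratio i = ratio j" for i j
  proof -
    have "[balancing (Suc i) * balancing j = ratio i * balancing i * balancing j] (mod int q)"
      using cong_mult[OF ratio[OF ij(1)] cong_refl[of "balancing j"]] by (rule cong_sym)
    moreover have "[ratio i * balancing i * balancing j = balancing i * balancing (Suc j)] (mod int q)"
      using cong_mult[OF cong_refl[of "balancing i"] ratio[OF ij(2)]] ij(4)
      by (simp add: ac_simps)
    ultimately have "[balancing (Suc i) * balancing j = balancing i * balancing (Suc j)] (mod int q)"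
      by (rule cong_trans)
    then have "int q dvd balancing (Suc i) * balancing (i + (j - i))
        - balancing i * balancing (Suc (i + (j - i)))"
      using ij(3) by (simp add: cong_iff_dvd_diff)
    then have "int q dvd balancing (j - i)"
      by (simp only: balancing_d_ocagne)
    then show False
      using none ij by force
  qed
  have "ratio ` {1..q + 1} \<subseteq> {0..<int q}"
    using prime_gt_0_nat[OF q] by (auto simp: ratio_def)
  then have "card (ratio ` {1..q + 1}) \<le> card {0..<int q}"
    by (rule card_mono[OF finite_atLeastLessThan_int])
  then have "\<not> inj_on ratio {1..q + 1}"
    by (intro pigeonhole) simp
  then obtain i j where ij: "i \<in> {1..q + 1}" "j \<in> {1..q + 1}" "i \<noteq> j" "ratio i = ratio j"
    unfolding inj_on_def by blast
  show False
  proof (cases "i < j")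
    case True
    then show False using no_collision ij by blast
  next
    case False
    then show False using no_collision[of j i] ij by simp
  qed
qed

lemma prime_dvd_balancing_prime_le:
  assumes "prime p" "prime q" "int q dvd balancing p"
  shows "p \<le> q + 1"
proof -
  obtain j where j: "j \<in> {1..q + 1}" "int q dvd balancing j"
    using ex_le_Suc_prime_dvd_balancing[OF assms(2)] by blast
  have "\<not> int q dvd balancing 1"
    using prime_gt_1_nat[OF assms(2)] by simp
  moreover have "int q dvd balancing (gcd p j)"
    using assms(3) j(2) by (rule dvd_balancing_gcd)
  ultimately have "\<not> coprime p j"
    by (auto simp del: balancing.simps)
  then have "p dvd j"
    using assms(1) prime_imp_coprime by blast
  moreover have "0 < j"
    using j(1) by simp
  ultimately have "p \<le> j"
    by (rule dvd_imp_le)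
  then show ?thesis
    using j(1) by simp
qed

lemma prime_factor_balancing_prime_ge:
  assumes p: "prime p" "5 \<le> p" and q: "prime q" "q dvd nat (balancing p)"
  shows "p \<le> q"
proof -
  have "int q dvd int (nat (balancing p))"
    using q(2) by (simp only: int_dvd_int_iff)
  then have "int q dvd balancing p"
    by simp
  then have "p \<le> q + 1"
    using prime_dvd_balancing_prime_le p(1) q(1) by blast
  moreover have "q \<noteq> p - 1"
  proof
    assume "q = p - 1"
    then have "even q" "2 < q"
      using p prime_odd_nat[of p] by auto
    then show False
      using q(1) prime_odd_nat[of q] by simp
  qed
  ultimately show ?thesis
    by linarith
qed

lemma finite_pos_divisors: "0 < m \<Longrightarrow> finite {d. d dvd m \<and> 0 < (d::nat)}"
  by (rule finite_subset[of _ "{..m}"]) (auto intro: dvd_imp_le)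

lemma divisor_sigma_Suc_0 [simp]: "divisor_sigma k (Suc 0) = 1"
proof -
  have "{d. d dvd 1 \<and> 0 < d} = {1::nat}"
    by auto
  then show ?thesis
    by (simp add: divisor_sigma_def)
qed

lemma sum_pow_le_divisor_sigma:
  assumes "0 < m" "A \<subseteq> {d. d dvd m \<and> 0 < d}"
  shows "(\<Sum>d\<in>A. d ^ k) \<le> divisor_sigma k m"
  unfolding divisor_sigma_def using assms finite_pos_divisors by (intro sum_mono2) auto

lemma divisor_sigma_ge_Suc_pow: "2 \<le> m \<Longrightarrow> m ^ k + 1 \<le> divisor_sigma k m"
  using sum_pow_le_divisor_sigma[of m "{1, m}" k] by auto

lemma divisor_sigma_one_ge_proper_divisor:
  assumes "1 < b" "b < m" "b dvd m"
  shows "m + b + 1 \<le> divisor_sigma 1 m"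
  using assms sum_pow_le_divisor_sigma[of m "{1, b, m}" 1] by auto

lemma divisor_sigma_le_pow_mult_sigma_one:
  assumes "0 < m" "1 \<le> k"
  shows "divisor_sigma k m \<le> m ^ (k - 1) * divisor_sigma 1 m"
proof -
  have "divisor_sigma k m = (\<Sum>d | d dvd m \<and> 0 < d. d ^ (k - 1) * d)"
    unfolding divisor_sigma_def using assms(2)
    by (intro sum.cong) (auto simp: power_Suc2[symmetric])
  also have "\<dots> \<le> (\<Sum>d | d dvd m \<and> 0 < d. m ^ (k - 1) * d)"
    using assms(1) by (intro sum_mono mult_right_mono power_mono) (auto dest: dvd_imp_le)
  also have "\<dots> = m ^ (k - 1) * divisor_sigma 1 m"
    by (simp add: divisor_sigma_def sum_distrib_left)
  finally show ?thesis .
qed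

lemma divisor_sigma_one_prime_mult_le:
  assumes q: "prime q" and "0 < m"
  shows "divisor_sigma 1 (q * m) \<le> (1 + q) * divisor_sigma 1 m"
proof -
  let ?D = "{d. d dvd m \<and> 0 < d}"
  have "{d. d dvd q * m \<and> 0 < d} \<subseteq> ?D \<union> (\<lambda>d. q * d) ` ?D"
  proof
    fix d assume d: "d \<in> {d. d dvd q * m \<and> 0 < d}"
    show "d \<in> ?D \<union> (\<lambda>d. q * d) ` ?D"
    proof (cases "q dvd d")
      case True
      then obtain e where "d = q * e" by (elim dvdE)
      then show ?thesis using d q by (auto simp: prime_gt_0_nat)
    next
      case False
      then have "coprime q d"
        using q prime_imp_coprime by blast
      then show ?thesis
        using d by (auto simp: coprime_commute coprime_dvd_mult_right_iff)
    qed
  qed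
  moreover have fin: "finite ?D"
    using assms(2) by (rule finite_pos_divisors)
  ultimately have "divisor_sigma 1 (q * m) \<le> (\<Sum>d \<in> ?D \<union> (\<lambda>d. q * d) ` ?D. d)"
    unfolding divisor_sigma_def power_one_right by (intro sum_mono2) auto
  also have "\<dots> \<le> (\<Sum>d\<in>?D. d) + (\<Sum>d\<in>(\<lambda>d. q * d) ` ?D. d)"
    using fin by (simp add: sum_Un_nat)
  also have "(\<Sum>d\<in>(\<lambda>d. q * d) ` ?D. d) \<le> (\<Sum>d\<in>?D. q * d)"
    using sum_image_le[OF fin, of id "\<lambda>d. q * d"] by simp
  also have "(\<Sum>d\<in>?D. d) + (\<Sum>d\<in>?D. q * d) = (1 + q) * divisor_sigma 1 m"
    by (simp add: divisor_sigma_def sum_distrib_left sum.distrib[symmetric] algebra_simps)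
  finally show ?thesis
    by simp
qed

text \<open>Here r is the number of prime factors of m counted with multiplicity; each of them
  multiplies sigma_1(m)/m by at most (Q + 1)/Q.\<close>
lemma divisor_sigma_one_le_pow_large_prime_factors:
  assumes "0 < m" and "\<And>q. prime q \<Longrightarrow> q dvd m \<Longrightarrow> Q \<le> q"
  shows "\<exists>r. Q ^ r \<le> m \<and> divisor_sigma 1 m * Q ^ r \<le> m * (Q + 1) ^ r"
  using assms
proof (induction m rule: less_induct)
  case (less m)
  show ?case
  proof (cases "m = 1")
    case True
    then show ?thesis
      by (intro exI[of _ 0]) simp
  next
    case False
    then obtain q where q: "prime q" "q dvd m"
      using prime_factor_nat by blast
    then obtain m' where m: "m = q * m'"
      by (elim dvdE)
    have "1 < q" "0 < m'"
      using prime_gt_1_nat[OF q(1)] less.prems(1) m by auto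
    then obtain r where r: "Q ^ r \<le> m'" "divisor_sigma 1 m' * Q ^ r \<le> m' * (Q + 1) ^ r"
      using less.IH[of m'] less.prems(2) m by fastforce
    have Q: "Q \<le> q"
      using less.prems(2) q by blast
    have "divisor_sigma 1 m * Q ^ Suc r \<le> (1 + q) * divisor_sigma 1 m' * Q ^ Suc r"
      using divisor_sigma_one_prime_mult_le[OF q(1) \<open>0 < m'\<close>] m by (intro mult_right_mono) auto
    also have "\<dots> = ((1 + q) * Q) * (divisor_sigma 1 m' * Q ^ r)"
      by (simp add: algebra_simps)
    also have "\<dots> \<le> (q * (Q + 1)) * (m' * (Q + 1) ^ r)"
      using Q by (intro mult_mono[OF _ r(2)]) (simp_all add: algebra_simps)
    also have "\<dots> = m * (Q + 1) ^ Suc r"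
      using m by (simp add: algebra_simps)
    finally have "divisor_sigma 1 m * Q ^ Suc r \<le> m * (Q + 1) ^ Suc r" .
    moreover have "Q ^ Suc r \<le> m"
      using Q r(1) m by (simp add: mult_mono)
    ultimately show ?thesis
      by blast
  qed
qed

lemma harm_le_one_plus_ln: "0 < n \<Longrightarrow> harm n \<le> 1 + ln (real n)"
proof (induction n rule: nat_induct_non_zero)
  case 1
  then show ?case by (simp add: harm_def)
next
  case (Suc n)
  have "ln (real n / real (Suc n)) \<le> real n / real (Suc n) - 1"
    using Suc.hyps by (intro ln_le_minus_one) auto
  then have "inverse (real (Suc n)) \<le> ln (real (Suc n)) - ln (real n)"
    using Suc.hyps by (simp add: ln_divide_pos field_simps)
  then show ?case
    using Suc.IH by (simp add: harm_Suc)
qed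

text \<open>Pairing each divisor d with m / d turns the sum of the divisors into
  m times the sum of their reciprocals.\<close>
lemma divisor_sigma_one_le_harm:
  assumes "0 < m"
  shows "real (divisor_sigma 1 m) \<le> real m * harm m"
proof -
  let ?D = "{d. d dvd m \<and> 0 < d}"
  have "divisor_sigma 1 m = (\<Sum>d\<in>?D. m div d)"
    unfolding divisor_sigma_def
    by (rule sum.reindex_bij_witness[of _ "\<lambda>d. m div d" "\<lambda>d. m div d"])
       (use assms in \<open>auto elim!: dvdE\<close>)
  then have "real (divisor_sigma 1 m) = real m * (\<Sum>d\<in>?D. inverse (real d))"
    by (auto simp: sum_distrib_left real_of_nat_div field_simps intro!: sum.cong)
  also have "\<dots> \<le> real m * harm m"
    unfolding harm_def using assms
    by (intro mult_left_mono sum_mono2) (auto dest: dvd_imp_le)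
  finally show ?thesis .
qed

lemma le_two_pow_pred: "n \<le> 2 ^ (n - 1)"
  by (cases n) (simp_all add: Suc_leI less_exp)

lemma two_mul_square_less_five_pow: "2 * (c * c) < (5::nat) ^ (c + 1)"
proof (induction c)
  case (Suc c)
  have "c < 5 ^ c"
    using less_exp[of c] by (rule less_le_trans) (simp add: power_mono)
  with Suc show ?case
    by simp
qed simp

lemma Suc_pow_le_three_mul_pow:
  assumes "0 < p" "r \<le> p"
  shows "(p + 1) ^ r \<le> 3 * p ^ r"
proof -
  have "1 + 1 / real p = real (p + 1) / real p"
    using assms(1) by (simp add: field_simps)
  then have "real ((p + 1) ^ r) / real (p ^ r) = (1 + 1 / real p) ^ r"
    by (simp add: power_divide)
  also have "\<dots> \<le> (1 + 1 / real p) ^ p"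
    using assms by (intro power_increasing) auto
  also have "\<dots> \<le> exp 1"
    by (rule exp_ge_one_plus_x_over_n_power_n) (use assms in auto)
  also have "\<dots> \<le> 3"
    by (rule exp_le)
  finally have "real ((p + 1) ^ r) \<le> real (3 * p ^ r)"
    using assms(1) by (simp add: pos_divide_le_eq)
  then show ?thesis
    by (simp only: of_nat_le_iff)
qed

lemma ln_six_le_two: "ln (6::real) \<le> 2"
proof -
  have "5 / 2 \<le> exp (1::real)"
    using exp_lower_Taylor_quadratic[of 1] by simp
  then have "5 / 2 * (5 / 2) \<le> exp (1::real) * exp 1"
    by (intro mult_mono) auto
  then have "6 \<le> exp (2::real)"
    by (simp add: mult_exp_exp)
  then show ?thesis
    using ln_le_cancel_iff[of 6 "exp 2"] by simp
qed

lemma divisor_sigma_one_balancing_le: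
  assumes "0 < n"
  shows "divisor_sigma 1 (nat (balancing n)) \<le> (2 * n - 1) * nat (balancing n)"
proof -
  define m where "m = nat (balancing n)"
  have m: "0 < m" "m \<le> 6 ^ (n - 1)"
    using balancing_pos[OF assms] balancing_le_pow[of n] by (simp_all add: m_def nat_le_iff)
  have "real m \<le> 6 ^ (n - 1)"
    using m(2) by simp
  then have "ln (real m) \<le> ln (6 ^ (n - 1))"
    using m(1) by simp
  also have "\<dots> \<le> real (n - 1) * 2"
    using ln_six_le_two by (simp add: ln_realpow mult_left_mono)
  finally have ln_m: "ln (real m) \<le> real (n - 1) * 2" .
  have "real (divisor_sigma 1 m) \<le> real m * harm m"
    using m(1) by (rule divisor_sigma_one_le_harm)
  also have "\<dots> \<le> real m * (1 + ln (real m))"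
    using m(1) by (intro mult_left_mono harm_le_one_plus_ln) auto
  also have "\<dots> \<le> real m * (1 + real (n - 1) * 2)"
    using ln_m by (intro mult_left_mono) auto
  also have "\<dots> = real ((2 * n - 1) * m)"
    using assms by (simp add: of_nat_diff)
  finally show ?thesis
    unfolding m_def of_nat_le_iff .
qed

lemma divisor_sigma_balancing_le:
  assumes "0 < n" "1 \<le> k"
  shows "divisor_sigma k (nat (balancing n)) \<le> (2 * n - 1) * nat (balancing n) ^ k"
proof -
  define m where "m = nat (balancing n)"
  have "0 < m"
    using balancing_pos[OF assms(1)] by (simp add: m_def)
  then have "divisor_sigma k m \<le> m ^ (k - 1) * ((2 * n - 1) * m)"
    using divisor_sigma_le_pow_mult_sigma_one[OF _ assms(2)] divisor_sigma_one_balancing_le[OF assms(1)]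
    by (metis m_def mult_le_mono2 order_trans)
  also have "\<dots> = (2 * n - 1) * m ^ k"
    using assms(2) by (cases k) (simp_all add: algebra_simps)
  finally show ?thesis
    unfolding m_def .
qed

lemma divisor_sigma_one_balancing_prime_le:
  assumes p: "prime p"
  shows "divisor_sigma 1 (nat (balancing p)) \<le> 5 * nat (balancing p)"
proof (cases "p \<le> 3")
  case True
  then have "(2 * p - 1) * nat (balancing p) \<le> 5 * nat (balancing p)"
    by (intro mult_right_mono) auto
  then show ?thesis
    using divisor_sigma_one_balancing_le[OF prime_gt_0_nat[OF p]] by linarith
next
  case False
  have "odd p"
    using prime_odd_nat[OF p] False by simp
  with False have p5: "5 \<le> p"
    by presburger
  define m where "m = nat (balancing p)"
  have "0 < m"
    using balancing_pos[of p] p5 by (simp add: m_def)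
  moreover have "p \<le> q" if "prime q" "q dvd m" for q
    using prime_factor_balancing_prime_ge[OF p p5 that(1)] that(2) unfolding m_def .
  ultimately obtain r where r: "p ^ r \<le> m" "divisor_sigma 1 m * p ^ r \<le> m * (p + 1) ^ r"
    using divisor_sigma_one_le_pow_large_prime_factors by blast
  have "m < p ^ p"
  proof (cases "p = 5")
    case True
    then show ?thesis
      using balancing_le_pow[of 5] by (simp add: m_def nat_le_iff)
  next
    case False
    have "m \<le> 6 ^ (p - 1)"
      using balancing_le_pow[of p] by (simp add: m_def nat_le_iff)
    also have "\<dots> \<le> p ^ (p - 1)"
      using False p5 by (intro power_mono) auto
    also have "\<dots> < p ^ p"
      using p5 by (intro power_strict_increasing) auto
    finally show ?thesis .
  qed
  with r(1) have "p ^ r < p ^ p"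
    by (rule le_less_trans)
  then have "r \<le> p"
    using p5 power_less_imp_less_exp[of p r p] by simp
  then have "(p + 1) ^ r \<le> 3 * p ^ r"
    using p5 by (intro Suc_pow_le_three_mul_pow) auto
  then have "divisor_sigma 1 m * p ^ r \<le> (3 * m) * p ^ r"
    using r(2) by (metis mult.assoc mult.left_commute mult_le_mono2 order_trans)
  then have "divisor_sigma 1 m \<le> 3 * m"
    using p5 by simp
  then show ?thesis
    unfolding m_def by simp
qed

lemma divisor_sigma_balancing_less_of_two_le:
  assumes k: "2 \<le> k" and n: "2 \<le> n"
  shows "int (divisor_sigma k (nat (balancing n))) < balancing (divisor_sigma k n)"
proof -
  define j where "j = n ^ (k - 1)"
  have "n ^ 1 \<le> j"
    unfolding j_def using k n by (intro power_increasing) auto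
  then have nj: "n \<le> j"
    by simp
  have "k \<le> 2 ^ (k - 1)"
    by (rule le_two_pow_pred)
  also have "\<dots> \<le> j"
    unfolding j_def using n by (intro power_mono) auto
  finally have kj: "k \<le> j" .
  have "2 * n - 1 \<le> 2 * 2 ^ (n - 1)"
    using le_two_pow_pred[of n] by simp
  also have "\<dots> \<le> 2 * 4 ^ (n - 1)"
    by (simp add: power_mono)
  also have "\<dots> \<le> 2 * 4 ^ (j - 1)"
    using nj by (simp add: power_increasing)
  also have "\<dots> \<le> 5 * 4 ^ (j - 1)"
    by simp
  finally have "int (2 * n - 1) \<le> int (5 * 4 ^ (j - 1))"
    by (simp only: of_nat_le_iff)
  then have coeff: "int (2 * n - 1) \<le> 5 * 4 ^ (j - 1)"
    by simp
  have B: "1 \<le> balancing n"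
    using balancing_pos[of n] n by simp
  have "int (divisor_sigma k (nat (balancing n))) \<le> int (2 * n - 1) * balancing n ^ k"
    using of_nat_mono[OF divisor_sigma_balancing_le[of n k], where 'a = int] n k by simp
  also have "\<dots> \<le> 5 * 4 ^ (j - 1) * balancing n ^ j"
    using coeff B kj by (intro mult_mono power_increasing) auto
  also have "\<dots> \<le> 5 * balancing (n * j)"
    using pow_balancing_le_balancing_mult[of j n] nj n by simp
  also have "\<dots> < balancing (Suc (n * j))"
    by (rule balancing_Suc_gt)
  also have "\<dots> \<le> balancing (divisor_sigma k n)"
    using divisor_sigma_ge_Suc_pow[OF n, of k] k
    by (intro balancing_mono) (simp add: j_def power_eq_if)
  finally show ?thesis .
qed

lemma divisor_sigma_one_balancing_less_composite:
  assumes n: "2 \<le> n" "\<not> prime n"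
  shows "int (divisor_sigma 1 (nat (balancing n))) < balancing (divisor_sigma 1 n)"
proof -
  obtain a where "a dvd n" "a \<noteq> 1" "a \<noteq> n"
    using n by (auto simp: prime_nat_iff)
  then obtain b where ab: "n = a * b" "1 < a" "1 < b"
    using n(1) by (auto elim!: dvdE simp: nat_neq_iff)
  define c where "c = max a b"
  have c: "1 < c" "c < n" "c dvd n"
    using ab by (auto simp: c_def max_def)
  have "n \<le> c * c"
    using ab by (simp add: c_def mult_mono)
  then have "2 * n - 1 < 5 ^ (c + 1)"
    using two_mul_square_less_five_pow[of c] by linarith
  then have "int (2 * n - 1) < int (5 ^ (c + 1))"
    by (simp only: of_nat_less_iff)
  then have coeff: "int (2 * n - 1) < 5 ^ (c + 1)"
    by simp
  have B: "0 < balancing n"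
    using balancing_pos[of n] n by simp
  have "int (divisor_sigma 1 (nat (balancing n))) \<le> int (2 * n - 1) * balancing n"
    using of_nat_mono[OF divisor_sigma_one_balancing_le[of n], where 'a = int] n by simp
  also have "\<dots> < 5 ^ (c + 1) * balancing n"
    using coeff B by (rule mult_strict_right_mono)
  also have "\<dots> \<le> balancing (n + (c + 1))"
    by (rule five_pow_mult_balancing_le)
  also have "\<dots> \<le> balancing (divisor_sigma 1 n)"
    using divisor_sigma_one_ge_proper_divisor[OF c] by (intro balancing_mono) simp
  finally show ?thesis .
qed

lemma divisor_sigma_one_balancing_less:
  assumes n: "2 \<le> n"
  shows "int (divisor_sigma 1 (nat (balancing n))) < balancing (divisor_sigma 1 n)"
proof (cases "prime n")
  case True
  have "int (divisor_sigma 1 (nat (balancing n))) \<le> 5 * balancing n"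
    using of_nat_mono[OF divisor_sigma_one_balancing_prime_le[OF True], where 'a = int] by simp
  also have "\<dots> < balancing (Suc n)"
    by (rule balancing_Suc_gt)
  also have "\<dots> \<le> balancing (divisor_sigma 1 n)"
    using divisor_sigma_ge_Suc_pow[OF n, of 1] by (intro balancing_mono) simp
  finally show ?thesis .
next
  case False
  with n show ?thesis
    by (rule divisor_sigma_one_balancing_less_composite)
qed

theorem theorem3p1:
  fixes k n :: nat
  assumes "k \<ge> 1" and "n \<ge> 1"
  shows "int (divisor_sigma k (nat (balancing n))) \<le> balancing (divisor_sigma k n)
         \<and> (int (divisor_sigma k (nat (balancing n))) = balancing (divisor_sigma k n) \<longrightarrow> n = 1)"
proof (cases "n = 1")
  case True
  then show ?thesis
    by simp
next
  case False
  with assms have "int (divisor_sigma k (nat (balancing n))) < balancing (divisor_sigma k n)"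
    using divisor_sigma_one_balancing_less divisor_sigma_balancing_less_of_two_le
    by (cases "k = 1") auto
  then show ?thesis
    by simp
qed

end
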